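(* For $n>0$ and $J\subseteq S$, there is a bijection from the set $\mathrm{NN}_n^J$ of $J$-nonnesting partitions of $[n]$ to the set of order ideals of the parabolic root poset $\Phi_+^J$.
   Context: $S=\{s_1,\dots,s_{n-1}\}$ with $s_i=(i,i+1)$ the adjacent transpositions of $\mathfrak{S}_n$. For $J\subseteq S$, writing $J=S\setminus\{s_{j_1},\dots,s_{j_r}\}$ with $j_1<\dots<j_r$, the $J$-regions are $\{1,\dots,j_1\},\{j_1+1,\dots,j_2\},\dots,\{j_r+1,\dots,n\}$. For a set partition $\mathbf P$ of $[n]$, a bump is a pair $(a,b)$, $a<b$, with $a,b$ in the same part and no element of that part strictly between them. $\mathbf P$ is $J$-nonnesting if (NN1) no two distinct elements of the same $J$-region lie in the same part, and (NN2) there are no two distinct bumps $(i_1,i_2),(j_1,j_2)$ with $i_1<j_1<j_2<i_2$. The root poset of $\mathfrak{S}_n$ is the set of transpositions $(i,j)$, $1\le i<j\le n$, ordered by $(i_1,i_2)\le(j_1,j_2)$ iff $i_1\ge j_1$ and $i_2\le j_2$. The parabolic root poset $\Phi_+^J$ is the order filter of the root poset generated by the adjacent transpositions $s_j=(j,j+1)$ with $s_j\notin J$ (with the induced order). *)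

theory Defs
  imports Main "HOL-Library.Disjoint_Sets"
begin

text \<open>The simple reflection s_i = (i,i+1) of S_n is encoded by the index i in {1..<n};
  a subset J of S is encoded as a set of indices J with J a subset of {1..<n}.\<close>

text \<open>Two elements a, b of [n] lie in the same J-region iff no removed generator s_j
  (j not in J) separates them, i.e. every index i with min a b \<le> i < max a b is in J.\<close>
definition same_J_region :: "nat \<Rightarrow> nat set \<Rightarrow> nat \<Rightarrow> nat \<Rightarrow> bool" where
  "same_J_region n J a b \<longleftrightarrow> a \<in> {1..n} \<and> b \<in> {1..n} \<and>
     (\<forall>i. min a b \<le> i \<and> i < max a b \<longrightarrow> i \<in> J)"

definition bump :: "nat set set \<Rightarrow> nat \<Rightarrow> nat \<Rightarrow> bool" where
  "bump P a b \<longleftrightarrow> a < b \<and> (\<exists>B\<in>P. a \<in> B \<and> b \<in> B \<and> (\<forall>c\<in>B. \<not> (a < c \<and> c < b)))"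

definition J_nonnesting :: "nat \<Rightarrow> nat set \<Rightarrow> nat set set \<Rightarrow> bool" where
  "J_nonnesting n J P \<longleftrightarrow>
     partition_on {1..n} P \<and>
     (\<forall>B\<in>P. \<forall>a\<in>B. \<forall>b\<in>B. a \<noteq> b \<longrightarrow> \<not> same_J_region n J a b) \<and>
     \<not> (\<exists>i1 i2 j1 j2. bump P i1 i2 \<and> bump P j1 j2 \<and> (i1, i2) \<noteq> (j1, j2) \<and>
          i1 < j1 \<and> j1 < j2 \<and> j2 < i2)"

definition NN :: "nat \<Rightarrow> nat set \<Rightarrow> nat set set set" where
  "NN n J = {P. J_nonnesting n J P}"

definition roots :: "nat \<Rightarrow> (nat \<times> nat) set" where
  "roots n = {(i, j). 1 \<le> i \<and> i < j \<and> j \<le> n}"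

definition root_le :: "nat \<times> nat \<Rightarrow> nat \<times> nat \<Rightarrow> bool" where
  "root_le r s \<longleftrightarrow> fst s \<le> fst r \<and> snd r \<le> snd s"

definition parabolic_roots :: "nat \<Rightarrow> nat set \<Rightarrow> (nat \<times> nat) set" where
  "parabolic_roots n J = {r \<in> roots n. \<exists>j \<in> {1..<n} - J. root_le (j, j + 1) r}"

definition order_ideals :: "'a set \<Rightarrow> ('a \<Rightarrow> 'a \<Rightarrow> bool) \<Rightarrow> 'a set set" where
  "order_ideals X le = {I. I \<subseteq> X \<and> (\<forall>x\<in>I. \<forall>y\<in>X. le y x \<longrightarrow> y \<in> I)}"

end

theory Submission
  imports Defs
begin

text \<open>A set partition of a set of naturals is determined by its bumps: its blocks are the
  connected components of the graph of bumps, and the bump sets of partitions are exactly the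
  arc diagrams, i.e. the sets of arcs \<open>(a, b)\<close>, \<open>a < b\<close>, in which every point is the left end of
  at most one arc and the right end of at most one arc. For a partition of \<open>[n]\<close>, condition (NN1)
  says that every bump crosses a gap \<open>s\<^sub>j \<notin> J\<close>, i.e. lies in the parabolic root poset (for pairs
  that are not bumps this follows, because any two elements of a block are joined by a chain of
  bumps), and (NN2) says that no two bumps are comparable in the root order. Thus the bump map
  identifies \<open>J\<close>-nonnesting partitions with antichains of \<open>\<Phi>\<^sup>J\<^sub>+\<close>, and the antichains of a finite
  poset correspond to its order ideals via down-closure and maximal elements.\<close>

definition antichains :: "'a set \<Rightarrow> ('a \<Rightarrow> 'a \<Rightarrow> bool) \<Rightarrow> 'a set set" where
  "antichains X le = {A. A \<subseteq> X \<and> (\<forall>a\<in>A. \<forall>b\<in>A. le a b \<longrightarrow> a = b)}"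

definition down_closure :: "'a set \<Rightarrow> ('a \<Rightarrow> 'a \<Rightarrow> bool) \<Rightarrow> 'a set \<Rightarrow> 'a set" where
  "down_closure X le A = {x \<in> X. \<exists>a\<in>A. le x a}"

definition maximal_elements :: "('a \<Rightarrow> 'a \<Rightarrow> bool) \<Rightarrow> 'a set \<Rightarrow> 'a set" where
  "maximal_elements le I = {x \<in> I. \<forall>y\<in>I. le x y \<longrightarrow> y = x}"

lemma finite_poset_has_maximal_above:
  assumes "finite I" "transp_on I le" "antisymp_on I le" "x \<in> I" "le x x"
  shows "\<exists>m\<in>maximal_elements le I. le x m"
proof -
  have "asymp_on I (\<lambda>a b. le a b \<and> a \<noteq> b)" "transp_on I (\<lambda>a b. le a b \<and> a \<noteq> b)"
    using assms(2,3) unfolding asymp_on_def transp_on_def antisymp_on_def by blast+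
  then obtain m where m: "m \<in> I" "le x m" "\<forall>y\<in>I. le m y \<and> m \<noteq> y \<longrightarrow> \<not> le x y"
    using Finite_Set.bex_max_element_with_property[of I _ "le x"] assms by blast
  then have "m \<in> maximal_elements le I"
    using assms(2,4) unfolding maximal_elements_def transp_on_def by blast
  with m show ?thesis by blast
qed

lemma bij_betw_down_closure_antichains:
  assumes "finite X" "reflp_on X le" "transp_on X le" "antisymp_on X le"
  shows "bij_betw (down_closure X le) (antichains X le) (order_ideals X le)"
proof (rule bij_betw_byWitness[where f' = "maximal_elements le"])
  show "\<forall>A\<in>antichains X le. maximal_elements le (down_closure X le A) = A"
  proof
    fix A assume "A \<in> antichains X le"
    then have A: "A \<subseteq> X" "\<And>a b. a \<in> A \<Longrightarrow> b \<in> A \<Longrightarrow> le a b \<Longrightarrow> a = b"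
      unfolding antichains_def by blast+
    have "a \<in> maximal_elements le (down_closure X le A)" if "a \<in> A" for a
    proof -
      have "y = a" if "y \<in> X" "le a y" "b \<in> A" "le y b" for y b
        using A \<open>a \<in> A\<close> that assms(3,4) transp_onD[of X le a y b] antisymp_onD[of X le a y]
        by blast
      then show ?thesis
        using A \<open>a \<in> A\<close> reflp_onD[OF assms(2)]
        unfolding maximal_elements_def down_closure_def by blast
    qed
    moreover have "x \<in> A" if "x \<in> maximal_elements le (down_closure X le A)" for x
      using that A reflp_onD[OF assms(2)]
      unfolding maximal_elements_def down_closure_def by blast
    ultimately show "maximal_elements le (down_closure X le A) = A" by blast
  qed
  show "\<forall>I\<in>order_ideals X le. down_closure X le (maximal_elements le I) = I"
  proof
    fix I assume I: "I \<in> order_ideals X le"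
    then have "I \<subseteq> X" unfolding order_ideals_def by blast
    then have "\<exists>m\<in>maximal_elements le I. le x m" if "x \<in> I" for x
      using finite_poset_has_maximal_above[of I le x] that assms(1) finite_subset
        transp_on_subset[OF assms(3)] antisymp_on_subset[OF assms(4)] reflp_onD[OF assms(2)]
      by blast
    then show "down_closure X le (maximal_elements le I) = I"
      using I unfolding down_closure_def maximal_elements_def order_ideals_def by blast
  qed
  show "down_closure X le ` antichains X le \<subseteq> order_ideals X le"
    using assms(3) unfolding down_closure_def order_ideals_def antichains_def transp_on_def by blast
  show "maximal_elements le ` order_ideals X le \<subseteq> antichains X le"
    unfolding maximal_elements_def order_ideals_def antichains_def by blast
qed

lemma partition_on_block_unique:
  "partition_on X P \<Longrightarrow> p \<in> P \<Longrightarrow> q \<in> P \<Longrightarrow> x \<in> p \<Longrightarrow> x \<in> q \<Longrightarrow> p = q"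
  unfolding partition_on_def disjoint_def by blast

lemma bump_in_block:
  assumes "partition_on X P" "bump P a b" "p \<in> P" "a \<in> p \<or> b \<in> p"
  shows "a \<in> p" "b \<in> p" "\<forall>c\<in>p. \<not> (a < c \<and> c < b)"
  using assms partition_on_block_unique[OF assms(1)] unfolding bump_def by metis+

lemma bump_quotient_iff:
  assumes "equiv X r"
  shows "bump (X // r) a b \<longleftrightarrow> a < b \<and> (a, b) \<in> r \<and> (\<forall>c. (a, c) \<in> r \<longrightarrow> \<not> (a < c \<and> c < b))"
proof
  assume "bump (X // r) a b"
  then obtain B where B: "a < b" "B \<in> X // r" "a \<in> B" "b \<in> B" "\<forall>c\<in>B. \<not> (a < c \<and> c < b)"
    unfolding bump_def by blast
  then have "B = r `` {a}"
    using assms by (metis quotientE equiv_class_eq Image_singleton_iff)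
  with B show "a < b \<and> (a, b) \<in> r \<and> (\<forall>c. (a, c) \<in> r \<longrightarrow> \<not> (a < c \<and> c < b))" by auto
next
  assume h: "a < b \<and> (a, b) \<in> r \<and> (\<forall>c. (a, c) \<in> r \<longrightarrow> \<not> (a < c \<and> c < b))"
  then have "a \<in> X" using assms by (meson equiv_class_eq_iff)
  then have "r `` {a} \<in> X // r" "a \<in> r `` {a}"
    using quotientI equiv_class_self[OF assms] by auto
  with h show "bump (X // r) a b" unfolding bump_def by blast
qed

definition bumps :: "nat set set \<Rightarrow> (nat \<times> nat) set" where
  "bumps P = {(a, b). bump P a b}"

definition arc_equiv :: "nat set \<Rightarrow> (nat \<times> nat) set \<Rightarrow> (nat \<times> nat) set" where
  "arc_equiv X A = (A \<union> A\<inverse>)\<^sup>* \<inter> X \<times> X"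

definition arc_partition :: "nat set \<Rightarrow> (nat \<times> nat) set \<Rightarrow> nat set set" where
  "arc_partition X A = X // arc_equiv X A"

locale arc_diagram =
  fixes X :: "nat set" and A :: "(nat \<times> nat) set"
  assumes arc_in: "(a, b) \<in> A \<Longrightarrow> a < b \<and> a \<in> X \<and> b \<in> X"
    and out_unique: "(a, b) \<in> A \<Longrightarrow> (a, c) \<in> A \<Longrightarrow> b = c"
    and in_unique: "(a, c) \<in> A \<Longrightarrow> (b, c) \<in> A \<Longrightarrow> a = b"
begin

lemma rtrancl_le: "(x, y) \<in> A\<^sup>* \<Longrightarrow> x \<le> y"
  by (induction rule: rtrancl_induct) (auto dest: arc_in)

text \<open>An undirected path cannot turn around: a point is the left end of at most one arc and
  the right end of at most one arc.\<close>
lemma undirected_path_monotone: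
  "(x, y) \<in> (A \<union> A\<inverse>)\<^sup>* \<Longrightarrow> (x, y) \<in> A\<^sup>* \<or> (y, x) \<in> A\<^sup>*"
proof (induction rule: rtrancl_induct)
  case (step y z)
  have backward: "(x, z) \<in> A\<^sup>* \<or> (z, x) \<in> A\<^sup>*" if "(x, y) \<in> A\<^sup>*" "(z, y) \<in> A"
    using that(1)
  proof (cases rule: rtranclE)
    case (step w)
    then show ?thesis using in_unique[OF that(2)] by blast
  qed (use that(2) in blast)
  have forward: "(x, z) \<in> A\<^sup>* \<or> (z, x) \<in> A\<^sup>*" if "(y, x) \<in> A\<^sup>*" "(y, z) \<in> A"
    using that(1)
  proof (cases rule: converse_rtranclE)
    case (step w)
    then show ?thesis using out_unique[OF that(2)] by blast
  qed (use that(2) in blast)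
  from step.hyps(2) have "(y, z) \<in> A \<or> (z, y) \<in> A" by blast
  with step.IH show ?case
    using forward backward rtrancl_into_rtrancl[of x y A z] converse_rtrancl_into_rtrancl[of z y A x]
    by blast
qed simp

lemma arc_equiv_less: "(a, b) \<in> arc_equiv X A \<Longrightarrow> a < b \<Longrightarrow> (a, b) \<in> A\<^sup>+"
  unfolding arc_equiv_def using undirected_path_monotone rtrancl_le
  by (metis IntD1 leD rtrancl_eq_or_trancl)

lemma equiv_arc_equiv: "equiv X (arc_equiv X A)"
proof (rule equivI)
  show "arc_equiv X A \<subseteq> X \<times> X" "refl_on X (arc_equiv X A)" "trans (arc_equiv X A)"
    unfolding refl_on_def trans_def arc_equiv_def by auto
  have "(A \<union> A\<inverse>)\<inverse> = A \<union> A\<inverse>" by auto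
  then show "sym (arc_equiv X A)"
    unfolding sym_def arc_equiv_def by (metis Int_iff mem_Sigma_iff rtrancl_converseI)
qed

lemma bumps_arc_partition: "bumps (arc_partition X A) = A"
proof -
  have "(a, b) \<in> A \<longleftrightarrow> a < b \<and> (a, b) \<in> arc_equiv X A \<and>
          (\<forall>c. (a, c) \<in> arc_equiv X A \<longrightarrow> \<not> (a < c \<and> c < b))" for a b
  proof
    assume ab: "(a, b) \<in> A"
    have "\<not> (a < c \<and> c < b)" if ac: "(a, c) \<in> arc_equiv X A" for c
    proof
      assume c: "a < c \<and> c < b"
      then obtain w where aw: "(a, w) \<in> A" and wc: "(w, c) \<in> A\<^sup>*"
        using arc_equiv_less ac by (meson tranclD)
      from aw have "w = b" using out_unique[OF ab] by blast
      with rtrancl_le[OF wc] c show False by simp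
    qed
    with ab arc_in show "a < b \<and> (a, b) \<in> arc_equiv X A \<and>
          (\<forall>c. (a, c) \<in> arc_equiv X A \<longrightarrow> \<not> (a < c \<and> c < b))"
      unfolding arc_equiv_def by blast
  next
    assume h: "a < b \<and> (a, b) \<in> arc_equiv X A \<and>
          (\<forall>c. (a, c) \<in> arc_equiv X A \<longrightarrow> \<not> (a < c \<and> c < b))"
    then obtain w where w: "(a, w) \<in> A" "(w, b) \<in> A\<^sup>*"
      using arc_equiv_less by (meson tranclD)
    then have "(a, w) \<in> arc_equiv X A" "a < w" "w \<le> b"
      using arc_in rtrancl_le unfolding arc_equiv_def by auto
    with h w show "(a, b) \<in> A" by force
  qed
  then show ?thesis
    unfolding bumps_def arc_partition_def bump_quotient_iff[OF equiv_arc_equiv] by auto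
qed

lemma partition_on_arc_partition: "partition_on X (arc_partition X A)"
  unfolding arc_partition_def by (rule partition_on_quotient[OF equiv_arc_equiv])

lemma antichain_iff_nonnesting:
  "(\<forall>r\<in>A. \<forall>s\<in>A. root_le r s \<longrightarrow> r = s) \<longleftrightarrow>
   \<not> (\<exists>i1 i2 j1 j2. (i1, i2) \<in> A \<and> (j1, j2) \<in> A \<and> (i1, i2) \<noteq> (j1, j2) \<and>
        i1 < j1 \<and> j1 < j2 \<and> j2 < i2)"
proof
  assume "\<forall>r\<in>A. \<forall>s\<in>A. root_le r s \<longrightarrow> r = s"
  then show "\<not> (\<exists>i1 i2 j1 j2. (i1, i2) \<in> A \<and> (j1, j2) \<in> A \<and> (i1, i2) \<noteq> (j1, j2) \<and>
        i1 < j1 \<and> j1 < j2 \<and> j2 < i2)"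
    unfolding root_le_def by fastforce
next
  assume nonnesting: "\<not> (\<exists>i1 i2 j1 j2. (i1, i2) \<in> A \<and> (j1, j2) \<in> A \<and> (i1, i2) \<noteq> (j1, j2) \<and>
        i1 < j1 \<and> j1 < j2 \<and> j2 < i2)"
  show "\<forall>r\<in>A. \<forall>s\<in>A. root_le r s \<longrightarrow> r = s"
  proof clarify
    fix a b c d assume ab: "(a, b) \<in> A" and cd: "(c, d) \<in> A" and "root_le (a, b) (c, d)"
    then have "c \<le> a" "b \<le> d" unfolding root_le_def by auto
    then consider "c = a" | "b = d" | "c < a" "b < d" by linarith
    then show "a = c \<and> b = d"
    proof cases
      case 1 then show ?thesis using out_unique ab cd by blast
    next
      case 2 then show ?thesis using in_unique ab cd by blast
    next
      case 3 then show ?thesis using nonnesting ab cd arc_in[OF ab] by blast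
    qed
  qed
qed

end

lemma arc_diagram_bumps:
  assumes P: "partition_on X P"
  shows "arc_diagram X (bumps P)"
proof
  fix a b assume "(a, b) \<in> bumps P"
  then show "a < b \<and> a \<in> X \<and> b \<in> X"
    using P unfolding bumps_def bump_def partition_on_def by blast
next
  fix a b c assume "(a, b) \<in> bumps P" "(a, c) \<in> bumps P"
  then have ab: "bump P a b" and ac: "bump P a c" unfolding bumps_def by auto
  then obtain p where "p \<in> P" "a \<in> p" unfolding bump_def by blast
  then have "b \<in> p" "c \<in> p" "\<forall>d\<in>p. \<not> (a < d \<and> d < b)" "\<forall>d\<in>p. \<not> (a < d \<and> d < c)"
    using bump_in_block[OF P ab, of p] bump_in_block[OF P ac, of p] by auto
  moreover have "a < b" "a < c" using ab ac unfolding bump_def by auto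
  ultimately show "b = c" by (meson linorder_neqE_nat)
next
  fix a b c assume "(a, c) \<in> bumps P" "(b, c) \<in> bumps P"
  then have ac: "bump P a c" and bc: "bump P b c" unfolding bumps_def by auto
  then obtain p where "p \<in> P" "c \<in> p" unfolding bump_def by blast
  then have "a \<in> p" "b \<in> p" "\<forall>d\<in>p. \<not> (a < d \<and> d < c)" "\<forall>d\<in>p. \<not> (b < d \<and> d < c)"
    using bump_in_block[OF P ac, of p] bump_in_block[OF P bc, of p] by auto
  moreover have "a < c" "b < c" using ac bc unfolding bump_def by auto
  ultimately show "a = b" by (meson linorder_neqE_nat)
qed

text \<open>Consecutive elements of a block form a bump.\<close>
lemma block_rtrancl_bumps:
  assumes P: "partition_on X P" and p: "p \<in> P" "x \<in> p" "y \<in> p" and "x \<le> y"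
  shows "(x, y) \<in> (bumps P)\<^sup>*"
  using p(2) \<open>x \<le> y\<close>
proof (induction "y - x" arbitrary: x rule: less_induct)
  case less
  show ?case
  proof (cases "x = y")
    case False
    define c where "c = (LEAST c. c \<in> p \<and> x < c)"
    have c: "c \<in> p" "x < c" "c \<le> y"
      using LeastI[of "\<lambda>c. c \<in> p \<and> x < c" y] Least_le[of "\<lambda>c. c \<in> p \<and> x < c" y]
        False less.prems p(3) unfolding c_def by auto
    have "bump P x c"
      unfolding bump_def using c less.prems p not_less_Least unfolding c_def by blast
    moreover have "(c, y) \<in> (bumps P)\<^sup>*"
      using less.hyps[of c] c by auto
    ultimately show ?thesis
      unfolding bumps_def by (simp add: converse_rtrancl_into_rtrancl)
  qed simp
qed

lemma arc_partition_bumps: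
  assumes P: "partition_on X P"
  shows "arc_partition X (bumps P) = P"
proof -
  have "arc_equiv X (bumps P) = {(x, y). \<exists>p\<in>P. x \<in> p \<and> y \<in> p}"
  proof safe
    fix x y assume "(x, y) \<in> arc_equiv X (bumps P)"
    then have "x \<in> X" "(x, y) \<in> (bumps P \<union> (bumps P)\<inverse>)\<^sup>*"
      unfolding arc_equiv_def by auto
    from this(2) show "\<exists>p\<in>P. x \<in> p \<and> y \<in> p"
    proof (induction rule: rtrancl_induct)
      case base
      then show ?case using P \<open>x \<in> X\<close> unfolding partition_on_def by auto
    next
      case (step y z)
      then obtain p where "p \<in> P" "x \<in> p" "y \<in> p" by blast
      moreover have "bump P y z \<or> bump P z y"
        using step.hyps(2) unfolding bumps_def by auto
      ultimately show ?case using bump_in_block(1,2)[OF P] by metis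
    qed
  next
    fix x y p assume "p \<in> P" "x \<in> p" "y \<in> p"
    moreover have "(bumps P)\<^sup>* \<subseteq> (bumps P \<union> (bumps P)\<inverse>)\<^sup>*"
      by (rule rtrancl_mono) blast
    ultimately have "(x, y) \<in> (bumps P \<union> (bumps P)\<inverse>)\<^sup>*"
      using block_rtrancl_bumps[OF P] rtrancl_converseI[of y x]
      by (metis converse_Un converse_converse le_cases subsetD sup_commute)
    moreover have "x \<in> X" "y \<in> X"
      using P \<open>p \<in> P\<close> \<open>x \<in> p\<close> \<open>y \<in> p\<close> unfolding partition_on_def by auto
    ultimately show "(x, y) \<in> arc_equiv X (bumps P)"
      unfolding arc_equiv_def by blast
  qed
  then show ?thesis
    using partition_on_eq_quotient[OF P] unfolding arc_partition_def by simp
qed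

lemma bij_betw_bumps:
  "bij_betw bumps {P. partition_on X P} {A. arc_diagram X A}"
proof (rule bij_betw_byWitness[where f' = "arc_partition X"])
  show "\<forall>P\<in>{P. partition_on X P}. arc_partition X (bumps P) = P"
    using arc_partition_bumps by blast
  show "\<forall>A\<in>{A. arc_diagram X A}. bumps (arc_partition X A) = A"
    using arc_diagram.bumps_arc_partition by blast
  show "bumps ` {P. partition_on X P} \<subseteq> {A. arc_diagram X A}"
    using arc_diagram_bumps by blast
  show "arc_partition X ` {A. arc_diagram X A} \<subseteq> {P. partition_on X P}"
    using arc_diagram.partition_on_arc_partition by blast
qed

lemma same_J_region_commute: "same_J_region n J a b \<longleftrightarrow> same_J_region n J b a"
  unfolding same_J_region_def by (auto simp: min.commute max.commute)

lemma same_J_region_shrink: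
  "same_J_region n J a b \<Longrightarrow> a \<le> w \<Longrightarrow> w \<le> b \<Longrightarrow> same_J_region n J a w"
  unfolding same_J_region_def by auto

lemma parabolic_root_iff_not_same_J_region:
  assumes "1 \<le> a" "a < b" "b \<le> n"
  shows "(a, b) \<in> parabolic_roots n J \<longleftrightarrow> \<not> same_J_region n J a b"
proof
  assume "(a, b) \<in> parabolic_roots n J"
  then obtain j where "j \<notin> J" "a \<le> j" "j < b"
    unfolding parabolic_roots_def root_le_def by auto
  then show "\<not> same_J_region n J a b"
    using assms unfolding same_J_region_def by auto
next
  assume "\<not> same_J_region n J a b"
  then obtain j where "j \<notin> J" "a \<le> j" "j < b"
    using assms unfolding same_J_region_def by auto
  then show "(a, b) \<in> parabolic_roots n J"
    using assms unfolding parabolic_roots_def roots_def root_le_def by auto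
qed

context arc_diagram begin

lemma trancl_not_same_J_region:
  assumes "A \<subseteq> parabolic_roots n J" "(a, b) \<in> A\<^sup>+"
  shows "\<not> same_J_region n J a b"
proof
  assume region: "same_J_region n J a b"
  obtain w where aw: "(a, w) \<in> A" and wb: "(w, b) \<in> A\<^sup>*"
    using assms(2) by (meson tranclD)
  have "1 \<le> a" "a < w" "w \<le> n" "(a, w) \<in> parabolic_roots n J"
    using aw assms(1) unfolding parabolic_roots_def roots_def by auto
  moreover have "same_J_region n J a w"
    using same_J_region_shrink[OF region] aw rtrancl_le[OF wb] arc_in by force
  ultimately show False using parabolic_root_iff_not_same_J_region by blast
qed

end

lemma J_nonnesting_iff_bumps_antichain:
  "J_nonnesting n J P \<longleftrightarrow>
     partition_on {1..n} P \<and> bumps P \<in> antichains (parabolic_roots n J) root_le"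
proof (cases "partition_on {1..n} P")
  case P: True
  interpret arc_diagram "{1..n}" "bumps P" by (rule arc_diagram_bumps[OF P])
  have "(\<forall>B\<in>P. \<forall>a\<in>B. \<forall>b\<in>B. a \<noteq> b \<longrightarrow> \<not> same_J_region n J a b) \<longleftrightarrow>
        bumps P \<subseteq> parabolic_roots n J"
  proof
    assume separated: "\<forall>B\<in>P. \<forall>a\<in>B. \<forall>b\<in>B. a \<noteq> b \<longrightarrow> \<not> same_J_region n J a b"
    show "bumps P \<subseteq> parabolic_roots n J"
    proof clarify
      fix a b assume ab: "(a, b) \<in> bumps P"
      then have "\<not> same_J_region n J a b"
        using separated unfolding bumps_def bump_def by fastforce
      then show "(a, b) \<in> parabolic_roots n J"
        using arc_in[OF ab] parabolic_root_iff_not_same_J_region by auto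
    qed
  next
    assume sub: "bumps P \<subseteq> parabolic_roots n J"
    have "\<not> same_J_region n J a b" if "B \<in> P" "a \<in> B" "b \<in> B" "a < b" for B a b
      using block_rtrancl_bumps[OF P that(1-3)] that(4) trancl_not_same_J_region[OF sub]
      by (simp add: rtrancl_eq_or_trancl)
    then show "\<forall>B\<in>P. \<forall>a\<in>B. \<forall>b\<in>B. a \<noteq> b \<longrightarrow> \<not> same_J_region n J a b"
      by (metis linorder_neqE_nat same_J_region_commute)
  qed
  then show ?thesis
    using P antichain_iff_nonnesting
    unfolding J_nonnesting_def antichains_def bumps_def by auto
qed (simp add: J_nonnesting_def)

lemma arc_diagram_parabolic_antichain:
  assumes "A \<in> antichains (parabolic_roots n J) root_le"
  shows "arc_diagram {1..n} A"
proof
  have A: "A \<subseteq> parabolic_roots n J" "\<And>r s. r \<in> A \<Longrightarrow> s \<in> A \<Longrightarrow> root_le r s \<Longrightarrow> r = s"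
    using assms unfolding antichains_def by blast+
  then show "(a, b) \<in> A \<Longrightarrow> a < b \<and> a \<in> {1..n} \<and> b \<in> {1..n}" for a b
    unfolding parabolic_roots_def roots_def by auto
  show "(a, b) \<in> A \<Longrightarrow> (a, c) \<in> A \<Longrightarrow> b = c" for a b c
    using A(2)[of "(a, b)" "(a, c)"] A(2)[of "(a, c)" "(a, b)"] unfolding root_le_def by force
  show "(a, c) \<in> A \<Longrightarrow> (b, c) \<in> A \<Longrightarrow> a = b" for a b c
    using A(2)[of "(a, c)" "(b, c)"] A(2)[of "(b, c)" "(a, c)"] unfolding root_le_def by force
qed

lemma bij_betw_bumps_NN: "bij_betw bumps (NN n J) (antichains (parabolic_roots n J) root_le)"
proof (rule bij_betw_subset[OF bij_betw_bumps])
  show "NN n J \<subseteq> {P. partition_on {1..n} P}"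
    unfolding NN_def J_nonnesting_def by blast
  have "A \<in> bumps ` NN n J" if "A \<in> antichains (parabolic_roots n J) root_le" for A
  proof -
    interpret arc_diagram "{1..n}" A by (rule arc_diagram_parabolic_antichain[OF that])
    have "arc_partition {1..n} A \<in> NN n J"
      using that partition_on_arc_partition bumps_arc_partition
      unfolding NN_def J_nonnesting_iff_bumps_antichain by simp
    then show ?thesis using bumps_arc_partition by force
  qed
  then show "bumps ` NN n J = antichains (parabolic_roots n J) root_le"
    unfolding NN_def J_nonnesting_iff_bumps_antichain by blast
qed

lemma finite_parabolic_roots: "finite (parabolic_roots n J)"
proof (rule finite_subset)
  show "parabolic_roots n J \<subseteq> {1..n} \<times> {1..n}"
    unfolding parabolic_roots_def roots_def by auto
qed simp

theorem lemma5p2: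
  fixes n :: nat and J :: "nat set"
  assumes "n > 0" and "J \<subseteq> {1..<n}"
  shows "\<exists>f. bij_betw f (NN n J) (order_ideals (parabolic_roots n J) root_le)"
proof -
  have "bij_betw (down_closure (parabolic_roots n J) root_le)
          (antichains (parabolic_roots n J) root_le) (order_ideals (parabolic_roots n J) root_le)"
    by (rule bij_betw_down_closure_antichains[OF finite_parabolic_roots])
      (auto simp: reflp_on_def transp_on_def antisymp_on_def root_le_def)
  with bij_betw_bumps_NN show ?thesis by (blast intro: bij_betw_trans)
qed

end
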